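(* Let $n\ge 1$, let $\mathcal{P}=\{x\in\mathbb{R}^n : \tfrac12(\max_i x_i-\min_i x_i)\le 1\}$, and let $V=\{-1,0,1\}^n\setminus(\{-1,0\}^n\cup\{0,1\}^n)$ be the set of vectors with entries in $\{-1,0,1\}$ having at least one entry equal to $1$ and at least one entry equal to $-1$. Then each proper open face of $\mathcal{P}$ contains exactly one element of $V$. Moreover, for any $x\in\partial\mathcal{P}=\mathcal{P}\setminus\operatorname{int}(\mathcal{P})$, the element of $V$ lying in the same open face as $x$ is $v=\operatorname{round}\big(x+(1-\max_i x_i)\mathbf{1}\big)$, where $\mathbf{1}=(1,\dots,1)^\top$ and $\operatorname{round}(\cdot)$ replaces by $0$ every component that is not equal to $1$ or $-1$.
   Context: A polyhedron is a finite intersection of closed halfspaces. A face of a polyhedron $\mathcal{Q}\subseteq\mathbb{R}^n$ is a non-empty subset $F$ with either $F=\mathcal{Q}$ or $F=\mathcal{Q}\cap\{x: b^\top x=c\}$ for some $b\in\mathbb{R}^n$, $c\in\mathbb{R}$ with $b^\top x\le c$ for all $x\in\mathcal{Q}$. A proper face is a face different from $\mathcal{Q}$. An open face is the relative interior of a face (a face consisting of a single point is its own open face); a proper open face is the relative interior of a proper face. *)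

theory Defs
  imports "HOL-Analysis.Analysis"
begin

definition poly_face :: "'a::euclidean_space set \<Rightarrow> 'a set \<Rightarrow> bool" where
  "poly_face Q F \<longleftrightarrow> F \<noteq> {} \<and>
     (F = Q \<or> (\<exists>b c. F = Q \<inter> {x. b \<bullet> x = c} \<and> (\<forall>x\<in>Q. b \<bullet> x \<le> c)))"

definition proper_open_face :: "'a::euclidean_space set \<Rightarrow> 'a set \<Rightarrow> bool" where
  "proper_open_face Q G \<longleftrightarrow> (\<exists>F. poly_face Q F \<and> F \<noteq> Q \<and> G = rel_interior F)"

definition vmax :: "real^'n \<Rightarrow> real" where
  "vmax x = Max (range (\<lambda>i. x $ i))"

definition vmin :: "real^'n \<Rightarrow> real" where
  "vmin x = Min (range (\<lambda>i. x $ i))"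

definition polyP :: "(real^'n) set" where
  "polyP = {x. (vmax x - vmin x) / 2 \<le> 1}"

definition setV :: "(real^'n) set" where
  "setV = {v. (\<forall>i. v $ i \<in> {-1, 0, 1}) \<and> (\<exists>i. v $ i = 1) \<and> (\<exists>j. v $ j = -1)}"

definition round_vec :: "real^'n \<Rightarrow> real^'n" where
  "round_vec x = (\<chi> i. if x $ i = 1 \<or> x $ i = -1 then x $ i else 0)"

definition ones :: "real^'n" where
  "ones = (\<chi> i. 1)"

end

theory Submission
  imports Defs
begin

text \<open>The polytope is cut out by the inequalities \<open>x\<^sub>i - x\<^sub>j \<le> 2\<close>, and its boundary consists of
  the points with \<open>max x - min x = 2\<close>. If \<open>x\<close> lies in the relative interior of a face \<open>F\<close>, each
  such inequality that is tight at \<open>x\<close> (i.e.\ \<open>x\<^sub>i = max x\<close>, \<open>x\<^sub>j = min x\<close>) is tight on all of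
  \<open>F\<close>. Every face is invariant under translation along \<open>\<one>\<close>; shifting \<open>x\<close> so that \<open>max x = 1\<close>
  puts its coordinates in \<open>[-1, 1]\<close>, and rounding the coordinates of modulus \<open>< 1\<close> to \<open>0\<close>
  keeps it in \<open>F\<close> and in the relative interior, because the shifted point lies strictly
  between the rounded one and a point of the polytope, and all tight pairs are preserved.
  Two elements of \<open>V\<close> in the same open face have the same tight pairs, hence the same
  \<open>\<plusminus>1\<close> pattern, hence coincide. A boundary point lies in the relative interior of the
  face cut out by its own tight pairs.\<close>

lemma finite_gap_below:
  fixes f :: "'a::finite \<Rightarrow> real"
  shows "\<exists>\<mu> < B. \<forall>a. f a < B \<longrightarrow> f a \<le> \<mu>"
proof -
  define A where "A = insert (B - 1) {f a | a. f a < B}"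
  have "finite A" unfolding A_def by simp
  then have "Max A < B" "\<forall>a. f a < B \<longrightarrow> f a \<le> Max A"
    by (auto simp: A_def intro: Max_ge)
  then show ?thesis by blast
qed

lemma face_of_convex_combinationD:
  assumes "T face_of S" "a \<in> S" "b \<in> S" "0 < u" "u < 1" "(1 - u) *\<^sub>R a + u *\<^sub>R b \<in> T"
  shows "a \<in> T \<and> b \<in> T"
proof (cases "a = b")
  case True
  then show ?thesis using assms(6) by (simp add: scaleR_left_distrib[symmetric])
next
  case False
  then have "(1 - u) *\<^sub>R a + u *\<^sub>R b \<in> open_segment a b" using assms(4,5) by (auto simp: in_segment)
  then show ?thesis using face_ofD assms(1-3,6) by blast
qed

lemma face_of_mem_rel_interiorI:
  fixes S :: "'a::euclidean_space set"
  assumes "convex S" "T face_of S" "z \<in> T"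
    and extend: "\<And>w. w \<in> T \<Longrightarrow> \<exists>e>1. (1 - e) *\<^sub>R w + e *\<^sub>R z \<in> S"
  shows "z \<in> rel_interior T"
proof -
  have "(1 - e) *\<^sub>R w + e *\<^sub>R z \<in> affine hull T" if "w \<in> T" for w e
    using that assms(3) by (intro mem_affine[OF affine_affine_hull]) (auto intro: hull_inc)
  then have "\<forall>w\<in>T. \<exists>e>1. (1 - e) *\<^sub>R w + e *\<^sub>R z \<in> T"
    using extend face_of_imp_eq_affine_Int[OF assms(1,2)] by blast
  then show ?thesis
    using convex_rel_interior_iff[OF face_of_imp_convex[OF assms(2)]] assms(3) by blast
qed

lemma rel_interior_maximizer_inner_eq:
  fixes F :: "'a::euclidean_space set"
  assumes "convex F" "x \<in> rel_interior F" and max: "\<And>w. w \<in> F \<Longrightarrow> a \<bullet> w \<le> a \<bullet> x"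
    and "w \<in> F"
  shows "a \<bullet> w = a \<bullet> x"
proof -
  obtain e where e: "e > 1" "(1 - e) *\<^sub>R w + e *\<^sub>R x \<in> F"
    using convex_rel_interior_iff[OF assms(1)] assms(2,4) by blast
  then have "(1 - e) * (a \<bullet> w) + e * (a \<bullet> x) \<le> a \<bullet> x"
    using max[OF e(2)] by (simp add: inner_add_right)
  then have "(e - 1) * (a \<bullet> x - a \<bullet> w) \<le> 0" by (simp add: algebra_simps)
  then show ?thesis using e(1) max[OF assms(4)] by (simp add: mult_le_0_iff)
qed

lemma poly_face_imp_face_of: "convex Q \<Longrightarrow> poly_face Q F \<Longrightarrow> F face_of Q"
  unfolding poly_face_def by (auto intro: face_of_refl face_of_Int_supporting_hyperplane_le)

lemma vmax_ge: "x $ i \<le> vmax x"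
  unfolding vmax_def by (rule Max_ge) auto

lemma vmin_le: "vmin x \<le> x $ i"
  unfolding vmin_def by (rule Min_le) auto

lemma vmax_attained: "\<exists>i. x $ i = vmax x"
proof -
  have "vmax x \<in> range (\<lambda>i. x $ i)" unfolding vmax_def by (rule Max_in) auto
  then show ?thesis by auto
qed

lemma vmin_attained: "\<exists>i. x $ i = vmin x"
proof -
  have "vmin x \<in> range (\<lambda>i. x $ i)" unfolding vmin_def by (rule Min_in) auto
  then show ?thesis by auto
qed

lemma mem_polyP_iff: "z \<in> polyP \<longleftrightarrow> (\<forall>i j. z $ i - z $ j \<le> 2)"
proof
  assume "z \<in> polyP"
  then have "vmax z - vmin z \<le> 2" unfolding polyP_def by simp
  then show "\<forall>i j. z $ i - z $ j \<le> 2"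
    using vmax_ge[of z] vmin_le[of z] by (smt (verit))
next
  assume "\<forall>i j. z $ i - z $ j \<le> 2"
  moreover obtain i j where "z $ i = vmax z" "z $ j = vmin z"
    using vmax_attained vmin_attained by metis
  ultimately have "vmax z - vmin z \<le> 2" by metis
  then show "z \<in> polyP" unfolding polyP_def by simp
qed

lemma abs_le_one_imp_mem_polyP: "(\<And>i. \<bar>z $ i\<bar> \<le> 1) \<Longrightarrow> z \<in> polyP"
  unfolding mem_polyP_iff by (smt (verit))

lemma polyP_translate_ones: "x \<in> polyP \<Longrightarrow> x + s *\<^sub>R ones \<in> polyP"
  by (simp add: mem_polyP_iff ones_def)

lemma inner_axis_diff: "(axis i 1 - axis j 1) \<bullet> z = z $ i - z $ j"
  by (simp add: inner_diff_left inner_axis')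

lemma convex_polyP: "convex (polyP :: (real^'n) set)"
proof -
  have "(polyP :: (real^'n) set) = (\<Inter>i. \<Inter>j. {z. (axis i 1 - axis j 1) \<bullet> z \<le> 2})"
    by (auto simp: mem_polyP_iff inner_axis_diff)
  moreover have "convex (\<Inter>i. \<Inter>j. {z :: real^'n. (axis i 1 - axis j 1) \<bullet> z \<le> (2::real)})"
    by (intro convex_INT convex_halfspace_le)
  ultimately show ?thesis by simp
qed

lemma polyP_boundary_spread:
  assumes "x \<in> polyP - interior polyP"
  shows "vmax x - vmin x = 2"
proof -
  let ?U = "\<Inter>i. \<Inter>j. {z. (axis i 1 - axis j 1) \<bullet> z < 2}"
  have "open ?U" by (simp add: open_INT open_halfspace_lt)
  moreover have "?U \<subseteq> polyP" by (auto simp: mem_polyP_iff inner_axis_diff less_imp_le)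
  ultimately have "x \<notin> ?U" using assms interior_maximal by blast
  then obtain i j where "\<not> x $ i - x $ j < 2" by (auto simp: inner_axis_diff)
  then have "vmax x - vmin x \<ge> 2" using vmax_ge[of x i] vmin_le[of x j] by linarith
  then show ?thesis using assms unfolding polyP_def by simp
qed

lemma rel_interior_face_diff_eq_two:
  assumes "convex F" "F \<subseteq> polyP" "x \<in> rel_interior F" "x $ i - x $ j = 2" "w \<in> F"
  shows "w $ i - w $ j = 2"
proof -
  have "\<And>w. w \<in> F \<Longrightarrow> (axis i 1 - axis j 1) \<bullet> w \<le> (axis i 1 - axis j 1) \<bullet> x"
    using assms(2,4) by (auto simp: inner_axis_diff mem_polyP_iff)
  from rel_interior_maximizer_inner_eq[OF assms(1,3) this assms(5)] show ?thesis
    using assms(4) by (simp add: inner_axis_diff)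
qed

lemma proper_open_face_polyPE:
  assumes "proper_open_face polyP G"
  obtains F where "F face_of polyP" "F \<noteq> polyP" "F \<noteq> {}" "G = rel_interior F"
proof -
  obtain F where F: "poly_face polyP F" "F \<noteq> polyP" "G = rel_interior F"
    using assms unfolding proper_open_face_def by blast
  moreover have "F \<noteq> {}" using F(1) unfolding poly_face_def by simp
  ultimately show ?thesis using that poly_face_imp_face_of[OF convex_polyP] by blast
qed

lemma proper_open_face_polyP_spread:
  assumes "proper_open_face polyP G" "x \<in> G"
  shows "vmax x - vmin x = 2"
proof -
  obtain F where F: "F face_of polyP" "F \<noteq> polyP" "G = rel_interior F"
    using assms(1) by (rule proper_open_face_polyPE)
  then have "x \<in> F" using assms(2) rel_interior_subset by blast
  then have "x \<in> polyP - interior polyP"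
    using face_of_imp_subset[OF F(1)] face_of_disjoint_interior[OF F(1,2)] by blast
  then show ?thesis by (rule polyP_boundary_spread)
qed

lemma face_of_polyP_translate_ones:
  assumes "F face_of polyP" "x \<in> F"
  shows "x + s *\<^sub>R ones \<in> F"
proof -
  have "x \<in> polyP" using assms face_of_imp_subset by blast
  then have "x + (- s) *\<^sub>R ones \<in> polyP" "x + s *\<^sub>R ones \<in> polyP"
    by (simp_all only: polyP_translate_ones)
  moreover have "(1 - 1/2) *\<^sub>R (x + (- s) *\<^sub>R ones) + (1/2) *\<^sub>R (x + s *\<^sub>R ones) = x"
    by (simp add: scaleR_add_right scaleR_diff_right)
  ultimately show ?thesis
    using face_of_convex_combinationD[OF assms(1), of _ _ "1/2"] assms(2) by simp
qed

lemma face_of_polyP_round_vec: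
  assumes F: "F face_of polyP" and "y \<in> F" and bound: "\<And>i. \<bar>y $ i\<bar> \<le> 1"
  shows "round_vec y \<in> F"
proof -
  \<comment> \<open>\<open>y\<close> lies strictly between \<open>round_vec y\<close> and \<open>z\<close>, which pushes the coordinates of
    modulus \<open>< 1\<close> outward by the factor \<open>2 - \<mu>\<close> and so stays in \<open>polyP\<close>.\<close>
  define d where "d = y - round_vec y"
  have d: "d $ i = (if \<bar>y $ i\<bar> = 1 then 0 else y $ i)" for i
    by (auto simp: d_def round_vec_def)
  obtain \<mu> where "\<mu> < 1" and \<mu>: "\<And>i. \<bar>y $ i\<bar> < 1 \<Longrightarrow> \<bar>y $ i\<bar> \<le> \<mu>"
    using finite_gap_below[of 1 "\<lambda>i. \<bar>y $ i\<bar>"] by blast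
  define z where "z = y + (1 - \<mu>) *\<^sub>R d"
  have "\<bar>z $ i\<bar> \<le> 1" for i
  proof (cases "\<bar>y $ i\<bar> = 1")
    case True
    then show ?thesis by (simp add: z_def d)
  next
    case False
    then have "\<bar>y $ i\<bar> \<le> \<mu>" using \<mu> bound[of i] by force
    have "z $ i = (2 - \<mu>) * y $ i"
      using False by (simp add: z_def d algebra_simps)
    then have "\<bar>z $ i\<bar> = (2 - \<mu>) * \<bar>y $ i\<bar>"
      using \<open>\<mu> < 1\<close> by (simp add: abs_mult)
    also have "\<dots> \<le> (2 - \<mu>) * \<mu>"
      using \<open>\<bar>y $ i\<bar> \<le> \<mu>\<close> \<open>\<mu> < 1\<close> by (intro mult_left_mono) auto
    also have "\<dots> \<le> 1"
      using zero_le_square[of "1 - \<mu>"] by (simp add: algebra_simps)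
    finally show ?thesis .
  qed
  then have "z \<in> polyP" by (rule abs_le_one_imp_mem_polyP)
  moreover have "round_vec y \<in> polyP"
    using bound by (intro abs_le_one_imp_mem_polyP) (simp add: round_vec_def)
  moreover have "(1 - u) *\<^sub>R round_vec y + u *\<^sub>R z = y" if "u * (2 - \<mu>) = 1" for u
  proof -
    have "(1 - u) *\<^sub>R round_vec y + u *\<^sub>R z = y + (1 - u * (2 - \<mu>)) *\<^sub>R (round_vec y - y)"
      by (simp add: vec_eq_iff z_def d_def algebra_simps)
    then show ?thesis using that by simp
  qed
  ultimately show ?thesis
    using face_of_convex_combinationD[OF F, of _ z "1 / (2 - \<mu>)"] \<open>y \<in> F\<close> \<open>\<mu> < 1\<close>
    by auto
qed

definition round_shift :: "real^'n \<Rightarrow> real^'n" where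
  "round_shift x = round_vec (x + (1 - vmax x) *\<^sub>R ones)"

lemma round_shift_nth:
  assumes "vmax x - vmin x = 2"
  shows "round_shift x $ i = (if x $ i = vmax x then 1 else if x $ i = vmin x then -1 else 0)"
  using assms by (auto simp: round_shift_def round_vec_def ones_def)

lemma round_shift_in_setV:
  assumes "vmax x - vmin x = 2"
  shows "round_shift x \<in> setV"
proof -
  obtain i j where "x $ i = vmax x" "x $ j = vmin x" using vmax_attained vmin_attained by metis
  then have "round_shift x $ i = 1" "round_shift x $ j = -1" "\<forall>k. round_shift x $ k \<in> {-1, 0, 1}"
    using assms by (auto simp: round_shift_nth)
  then show ?thesis unfolding setV_def by blast
qed

lemma setV_nth_cases: "v \<in> setV \<Longrightarrow> v $ k = -1 \<or> v $ k = 0 \<or> v $ k = 1"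
  unfolding setV_def by auto

lemma round_shift_mem_rel_interior:
  assumes F: "F face_of polyP" and x: "x \<in> rel_interior F" and spread: "vmax x - vmin x = 2"
  shows "round_shift x \<in> rel_interior F"
proof -
  let ?v = "round_shift x"
  have "x \<in> F" using x rel_interior_subset by blast
  then have "x + (1 - vmax x) *\<^sub>R ones \<in> F" by (rule face_of_polyP_translate_ones[OF F])
  moreover have "\<bar>(x + (1 - vmax x) *\<^sub>R ones) $ i\<bar> \<le> 1" for i
    using vmax_ge[of x i] vmin_le[of x i] spread by (simp add: ones_def)
  ultimately have "?v \<in> F"
    unfolding round_shift_def by (rule face_of_polyP_round_vec[OF F])
  \<comment> \<open>Pairs with \<open>?v $ a = 1\<close>, \<open>?v $ b = -1\<close> are pinned on \<open>F\<close>; on all other pairs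
    \<open>?v $ a - ?v $ b \<le> 1\<close> leaves room to extend segments beyond \<open>?v\<close>.\<close>
  moreover have "(1 - 4/3) *\<^sub>R w + (4/3) *\<^sub>R ?v \<in> polyP" if "w \<in> F" for w
  proof -
    have wP: "w \<in> polyP" using that F face_of_imp_subset by blast
    have "((1 - 4/3) *\<^sub>R w + (4/3) *\<^sub>R ?v) $ a - ((1 - 4/3) *\<^sub>R w + (4/3) *\<^sub>R ?v) $ b \<le> 2"
      for a b
    proof (cases "?v $ a = 1 \<and> ?v $ b = -1")
      case True
      then have "x $ a - x $ b = 2" using spread by (auto simp: round_shift_nth split: if_splits)
      then have "w $ a - w $ b = 2"
        using rel_interior_face_diff_eq_two[OF face_of_imp_convex[OF F] face_of_imp_subset[OF F] x]
          that by blast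
      then show ?thesis using True by (simp add: algebra_simps)
    next
      case False
      then have "?v $ a - ?v $ b \<le> 1" using spread by (auto simp: round_shift_nth)
      moreover have "w $ b - w $ a \<le> 2" using wP mem_polyP_iff by blast
      ultimately show ?thesis by (simp add: algebra_simps)
    qed
    then show ?thesis by (simp add: mem_polyP_iff)
  qed
  ultimately show ?thesis
    by (intro face_of_mem_rel_interiorI[OF convex_polyP F]) (auto intro!: exI[of _ "4/3"])
qed

lemma round_shift_mem_proper_open_face:
  assumes "proper_open_face polyP G" "x \<in> G"
  shows "round_shift x \<in> G"
proof -
  obtain F where F: "F face_of polyP" "G = rel_interior F"
    using assms(1) by (rule proper_open_face_polyPE)
  show ?thesis
    using round_shift_mem_rel_interior[OF F(1) _ proper_open_face_polyP_spread[OF assms]] assms(2) F(2)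
    by simp
qed

lemma setV_rel_interior_sign_transfer:
  assumes "convex F" "F \<subseteq> polyP" "v \<in> setV" "v \<in> rel_interior F" "w \<in> setV" "w \<in> F"
  shows "(v $ a = 1 \<longrightarrow> w $ a = 1) \<and> (v $ a = -1 \<longrightarrow> w $ a = -1)"
proof -
  obtain i j where ij: "v $ i = 1" "v $ j = -1" using assms(3) unfolding setV_def by auto
  have "w $ a - w $ j = 2" if "v $ a = 1"
    using rel_interior_face_diff_eq_two[OF assms(1,2,4) _ assms(6)] that ij by simp
  moreover have "w $ i - w $ a = 2" if "v $ a = -1"
    using rel_interior_face_diff_eq_two[OF assms(1,2,4) _ assms(6)] that ij by simp
  ultimately show ?thesis
    using setV_nth_cases[OF assms(5), of a] setV_nth_cases[OF assms(5), of i]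
      setV_nth_cases[OF assms(5), of j] by linarith
qed

lemma setV_rel_interior_unique:
  assumes "convex F" "F \<subseteq> polyP" "v \<in> setV" "v \<in> rel_interior F" "w \<in> setV" "w \<in> rel_interior F"
  shows "v = w"
proof -
  have "v $ k = w $ k" for k
    using setV_rel_interior_sign_transfer[OF assms(1-4,5), of k]
      setV_rel_interior_sign_transfer[OF assms(1,2,5,6,3), of k]
      setV_nth_cases[OF assms(3), of k] setV_nth_cases[OF assms(5), of k]
      rel_interior_subset assms(4,6) by (metis subsetD)
  then show ?thesis by (simp add: vec_eq_iff)
qed

definition polyP_face :: "('n \<times> 'n) set \<Rightarrow> (real^'n) set" where
  "polyP_face K = {z \<in> polyP. \<forall>(i, j) \<in> K. z $ i - z $ j = 2}"

lemma poly_face_polyP_face: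
  fixes K :: "('n::finite \<times> 'n) set"
  assumes "polyP_face K \<noteq> {}"
  shows "poly_face polyP (polyP_face K)"
proof -
  define b :: "real^'n" where "b = (\<Sum>(i, j) \<in> K. axis i 1 - axis j 1)"
  define c :: real where "c = (\<Sum>(i, j) \<in> K. 2)"
  have b: "b \<bullet> z = (\<Sum>(i, j) \<in> K. z $ i - z $ j)" for z
    unfolding b_def inner_sum_left by (intro sum.cong) (auto simp: inner_axis_diff)
  have valid: "b \<bullet> z \<le> c" if "z \<in> polyP" for z
    using that unfolding b c_def mem_polyP_iff by (intro sum_mono) auto
  have "polyP_face K = polyP \<inter> {z. b \<bullet> z = c}"
  proof (intro set_eqI iffI)
    fix z assume z: "z \<in> polyP_face K"
    then have "(\<Sum>(i, j) \<in> K. z $ i - z $ j) = (\<Sum>(i, j) \<in> K. 2)"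
      unfolding polyP_face_def by (intro sum.cong) auto
    then show "z \<in> polyP \<inter> {z. b \<bullet> z = c}"
      using z unfolding polyP_face_def b c_def by simp
  next
    fix z assume z: "z \<in> polyP \<inter> {z. b \<bullet> z = c}"
    then have eq: "(\<Sum>p \<in> K. z $ fst p - z $ snd p) = (\<Sum>p \<in> K. 2)"
      unfolding b c_def by (simp add: case_prod_beta')
    have le: "z $ fst p - z $ snd p \<le> 2" for p using z mem_polyP_iff by blast
    have "z $ fst p - z $ snd p = 2" if "p \<in> K" for p
      using sum_mono_inv[OF eq le that] by simp
    then show "z \<in> polyP_face K" using z unfolding polyP_face_def by auto
  qed
  then show ?thesis unfolding poly_face_def using assms valid by blast
qed

lemma polyP_face_neq_polyP: "K \<noteq> {} \<Longrightarrow> polyP_face K \<noteq> polyP"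
proof -
  assume "K \<noteq> {}"
  then have "0 \<notin> polyP_face K" by (auto simp: polyP_face_def)
  moreover have "0 \<in> polyP" by (simp add: mem_polyP_iff)
  ultimately show ?thesis by blast
qed

definition extreme_pairs :: "real^'n \<Rightarrow> ('n \<times> 'n) set" where
  "extreme_pairs x = {(i, j). x $ i = vmax x \<and> x $ j = vmin x}"

lemma mem_rel_interior_polyP_face_extreme_pairs:
  assumes xP: "x \<in> polyP" and spread: "vmax x - vmin x = 2"
  shows "x \<in> rel_interior (polyP_face (extreme_pairs x))"
proof -
  let ?F = "polyP_face (extreme_pairs x)"
  have xF: "x \<in> ?F" using xP spread by (auto simp: polyP_face_def extreme_pairs_def)
  then have face: "?F face_of polyP"
    using poly_face_imp_face_of[OF convex_polyP] poly_face_polyP_face by blast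
  obtain \<mu> where "\<mu> < 2" and \<mu>: "\<And>a b. x $ a - x $ b < 2 \<Longrightarrow> x $ a - x $ b \<le> \<mu>"
    using finite_gap_below[of 2 "\<lambda>p. x $ fst p - x $ snd p"] by fastforce
  define t where "t = (2 - \<mu>) / 4"
  have "t > 0" using \<open>\<mu> < 2\<close> by (simp add: t_def)
  have "(1 - (1 + t)) *\<^sub>R w + (1 + t) *\<^sub>R x \<in> polyP" if "w \<in> ?F" for w
  proof -
    have wP: "w \<in> polyP" using that by (simp add: polyP_face_def)
    have "((1 - (1 + t)) *\<^sub>R w + (1 + t) *\<^sub>R x) $ a - ((1 - (1 + t)) *\<^sub>R w + (1 + t) *\<^sub>R x) $ b
        = (1 + t) * (x $ a - x $ b) - t * (w $ a - w $ b)" for a b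
      by (simp add: algebra_simps)
    moreover have "(1 + t) * (x $ a - x $ b) - t * (w $ a - w $ b) \<le> 2" for a b
    proof (cases "x $ a - x $ b < 2")
      case True
      have "(1 + t) * (x $ a - x $ b) \<le> (1 + t) * \<mu>"
        using \<mu>[OF True] \<open>t > 0\<close> by (intro mult_left_mono) auto
      moreover have "t * (w $ b - w $ a) \<le> t * 2"
        using wP \<open>t > 0\<close> mem_polyP_iff by (intro mult_left_mono) auto
      then have "- (t * (w $ a - w $ b)) \<le> t * 2" by (simp add: algebra_simps)
      moreover have "(1 + t) * \<mu> + t * 2 = 2 - (2 - \<mu>)\<^sup>2 / 4"
        by (simp add: t_def field_simps power2_eq_square)
      moreover have "0 \<le> (2 - \<mu>)\<^sup>2 / 4" by simp
      ultimately show ?thesis by linarith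
    next
      case False
      moreover have "x $ a - x $ b \<le> 2" using xP mem_polyP_iff by blast
      ultimately have "x $ a - x $ b = 2" by linarith
      then have "(a, b) \<in> extreme_pairs x"
        using vmax_ge[of x a] vmin_le[of x b] spread unfolding extreme_pairs_def by auto
      then have "w $ a - w $ b = 2" using that by (auto simp: polyP_face_def)
      then show ?thesis using \<open>x $ a - x $ b = 2\<close> by (simp add: algebra_simps)
    qed
    ultimately show ?thesis by (simp add: mem_polyP_iff)
  qed
  then show ?thesis
    using \<open>t > 0\<close>
    by (intro face_of_mem_rel_interiorI[OF convex_polyP face xF] exI[of _ "1 + t"]) auto
qed

lemma proper_open_face_through_round_shift:
  assumes "x \<in> polyP" "vmax x - vmin x = 2"
  shows "\<exists>G. proper_open_face polyP G \<and> x \<in> G \<and> round_shift x \<in> G"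
proof -
  let ?F = "polyP_face (extreme_pairs x)"
  have x: "x \<in> rel_interior ?F" using mem_rel_interior_polyP_face_extreme_pairs[OF assms] .
  then have "poly_face polyP ?F" using poly_face_polyP_face rel_interior_subset by blast
  moreover have "?F \<noteq> polyP"
    using vmax_attained[of x] vmin_attained[of x]
    by (intro polyP_face_neq_polyP) (auto simp: extreme_pairs_def)
  moreover have "round_shift x \<in> rel_interior ?F"
    using round_shift_mem_rel_interior[OF _ x assms(2)] calculation(1)
      poly_face_imp_face_of[OF convex_polyP] by blast
  ultimately show ?thesis using x unfolding proper_open_face_def by blast
qed

theorem lemma3:
  shows "(\<forall>G. proper_open_face (polyP :: (real^'n) set) G \<longrightarrow> (\<exists>!v. v \<in> setV \<and> v \<in> G))
    \<and> (\<forall>x \<in> (polyP :: (real^'n) set) - interior polyP.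
         let v = round_vec (x + (1 - vmax x) *\<^sub>R ones) in
           v \<in> setV \<and>
           (\<exists>G. proper_open_face polyP G \<and> x \<in> G \<and> v \<in> G) \<and>
           (\<forall>G. proper_open_face polyP G \<and> x \<in> G \<longrightarrow> v \<in> G))"
proof (intro conjI allI impI ballI)
  fix G :: "(real^'n) set"
  assume G: "proper_open_face polyP G"
  then obtain F where F: "F face_of polyP" "F \<noteq> {}" "G = rel_interior F"
    by (rule proper_open_face_polyPE)
  then have "G \<noteq> {}" using rel_interior_eq_empty[OF face_of_imp_convex[OF F(1)]] by simp
  then obtain x where x: "x \<in> G" by blast
  let ?v = "round_shift x"
  have v: "?v \<in> setV" "?v \<in> G"
    using round_shift_in_setV[OF proper_open_face_polyP_spread[OF G x]]
      round_shift_mem_proper_open_face[OF G x] by auto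
  show "\<exists>!v. v \<in> setV \<and> v \<in> G"
  proof (rule ex1I)
    show "?v \<in> setV \<and> ?v \<in> G" using v by blast
    show "w = ?v" if "w \<in> setV \<and> w \<in> G" for w
      using setV_rel_interior_unique[OF face_of_imp_convex[OF F(1)] face_of_imp_subset[OF F(1)]]
        that v F(3) by blast
  qed
next
  fix x :: "real^'n"
  assume x: "x \<in> polyP - interior polyP"
  then have spread: "vmax x - vmin x = 2" by (rule polyP_boundary_spread)
  have "round_shift x \<in> setV \<and>
      (\<exists>G. proper_open_face polyP G \<and> x \<in> G \<and> round_shift x \<in> G) \<and>
      (\<forall>G. proper_open_face polyP G \<and> x \<in> G \<longrightarrow> round_shift x \<in> G)"
    using round_shift_in_setV[OF spread] proper_open_face_through_round_shift[OF _ spread] x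
      round_shift_mem_proper_open_face by blast
  then show "let v = round_vec (x + (1 - vmax x) *\<^sub>R ones) in
      v \<in> setV \<and>
      (\<exists>G. proper_open_face polyP G \<and> x \<in> G \<and> v \<in> G) \<and>
      (\<forall>G. proper_open_face polyP G \<and> x \<in> G \<longrightarrow> v \<in> G)"
    unfolding Let_def round_shift_def .
qed

end
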